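(* For all $0\le\varepsilon\le1$, $$\Delta(\varepsilon)=\inf\Big\{\frac gn:\ n\ge g\ge1 \text{ integers},\ \frac{R(g,n)}{n}\ge\varepsilon\Big\}.$$
   Context: A set $S$ of integers is a $B^*[g]$ set if for every integer $m$ there are at most $g$ ordered pairs $(s_1,s_2)\in S\times S$ with $s_1+s_2=m$. $R(g,n)$ is the maximum cardinality of a $B^*[g]$ set contained in $\{1,2,\dots,n\}$. Let $\lambda$ be Lebesgue measure; a set $C\subseteq\mathbb{R}$ is symmetric if there is $c$ with $c+x\in C\iff c-x\in C$; $D(A):=\sup\{\lambda(C): C\subseteq A \text{ measurable and symmetric}\}$, and $\Delta(\varepsilon):=\inf\{D(A): A\subseteq[0,1) \text{ measurable},\ \lambda(A)=\varepsilon\}$. *)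

theory Defs
  imports "HOL-Analysis.Analysis"
begin

definition Bstar :: "nat \<Rightarrow> int set \<Rightarrow> bool" where
  "Bstar g S \<longleftrightarrow> (\<forall>m::int. card {(s1, s2). s1 \<in> S \<and> s2 \<in> S \<and> s1 + s2 = m} \<le> g)"

definition R :: "nat \<Rightarrow> nat \<Rightarrow> nat" where
  "R g n = Max (card ` {S. S \<subseteq> {1..int n} \<and> Bstar g S})"

definition symmetric_set :: "real set \<Rightarrow> bool" where
  "symmetric_set C \<longleftrightarrow> (\<exists>c. \<forall>x. c + x \<in> C \<longleftrightarrow> c - x \<in> C)"

definition D :: "real set \<Rightarrow> real" where
  "D A = Sup {measure lebesgue C | C. C \<subseteq> A \<and> C \<in> sets lebesgue \<and> symmetric_set C}"

definition Delta :: "real \<Rightarrow> real" where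
  "Delta \<epsilon> = Inf {D A | A. A \<subseteq> {0..<1} \<and> A \<in> sets lebesgue \<and> measure lebesgue A = \<epsilon>}"

end

theory Submission
  imports Defs
begin

(* Split [0,1) into the cells [(k-1)/n, k/n).  A B*[g] set S in {1..n} yields a set A of
measure \<epsilon> by taking an initial piece of each cell indexed by S.  Let C \<subseteq> A be symmetric,
x \<in> C \<longleftrightarrow> d - x \<in> C, and write dn = q + \<phi> with q an integer and 0 \<le> \<phi> < 1.  A point of C in
cell s has its mirror image in cell q+2-s if it lies in the left part of cell s, of length
\<phi>/n, and in cell q+1-s if it lies in the right part, of length (1-\<phi>)/n.  The mirror cell lies
in S, and as S is B*[g] there are at most g cells s in S with q+2-s in S and at most g with
q+1-s in S, so \<lambda>(C) \<le> g\<phi>/n + g(1-\<phi>)/n = g/n.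

Conversely, a measurable A of measure \<epsilon> < 1 is approximated from outside by a union of
cells indexed by some S \<subseteq> {1..n} with |S| > \<epsilon>n and small excess over A.  If the
representation function of S is maximal at m, with value G, then S is a B*[G] set, so
R(G,n) \<ge> \<epsilon>n, and the open cells s with m-s in S form a symmetric set of measure G/n lying
in A up to a small set, so D(A) is at least G/n up to a small error.  For \<epsilon> = 1 the
interval (0,1) shows D(A) = 1. *)

lemma symmetric_set_iff_reflection:
  "symmetric_set C \<longleftrightarrow> (\<exists>d. \<forall>x. x \<in> C \<longleftrightarrow> d - x \<in> C)"
proof
  assume "symmetric_set C"
  then obtain c where c: "\<And>x. c + x \<in> C \<longleftrightarrow> c - x \<in> C"
    unfolding symmetric_set_def by blast
  have "x \<in> C \<longleftrightarrow> 2 * c - x \<in> C" for x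
  proof -
    have "c + (x - c) = x" "c - (x - c) = 2 * c - x" by simp_all
    then show ?thesis using c[of "x - c"] by simp
  qed
  then show "\<exists>d. \<forall>x. x \<in> C \<longleftrightarrow> d - x \<in> C" by blast
next
  assume "\<exists>d. \<forall>x. x \<in> C \<longleftrightarrow> d - x \<in> C"
  then obtain d where d: "\<And>x. x \<in> C \<longleftrightarrow> d - x \<in> C" by blast
  have "d / 2 + x \<in> C \<longleftrightarrow> d / 2 - x \<in> C" for x
  proof -
    have "d - (d / 2 + x) = d / 2 - x" by simp
    then show ?thesis using d[of "d / 2 + x"] by simp
  qed
  then show "symmetric_set C" unfolding symmetric_set_def by blast
qed

lemma symmetric_set_empty [simp]: "symmetric_set {}"
  unfolding symmetric_set_def by simp

lemma measure_lebesgue_reflect: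
  "measure lebesgue ((\<lambda>x::real. d - x) ` S) = measure lebesgue S"
proof -
  have "(\<lambda>x::real. d - x) = (\<lambda>x. (-1) *\<^sub>R x + d)" by (auto simp: fun_eq_iff)
  then show ?thesis using measure_lebesgue_affine[of "-1" d S] by simp
qed

lemma sets_lebesgue_reflect:
  assumes "A \<in> sets lebesgue"
  shows "(\<lambda>x::real. d - x) -` A \<in> sets lebesgue"
proof -
  have "(\<lambda>x::real. d - x) = (\<lambda>x. d + (\<Sum>j\<in>Basis. ((-1) * (x \<bullet> j)) *\<^sub>R j))"
    by (auto simp: fun_eq_iff)
  then have "(\<lambda>x::real. d - x) \<in> lebesgue \<rightarrow>\<^sub>M lebesgue"
    using lebesgue_affine_measurable[of "\<lambda>_. -1" d] by simp
  from measurable_sets[OF this assms] show ?thesis by simp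
qed

lemma lmeasurable_subset_unit:
  "A \<subseteq> {0..<1::real} \<Longrightarrow> A \<in> sets lebesgue \<Longrightarrow> A \<in> lmeasurable"
  by (rule fmeasurableI2[of "{0..1}"]) auto

lemma measure_le_D:
  assumes "A \<in> lmeasurable" "C \<subseteq> A" "C \<in> sets lebesgue" "symmetric_set C"
  shows "measure lebesgue C \<le> D A"
  unfolding D_def
proof (rule cSup_upper)
  show "measure lebesgue C \<in> {measure lebesgue C | C. C \<subseteq> A \<and> C \<in> sets lebesgue \<and> symmetric_set C}"
    using assms by blast
  show "bdd_above {measure lebesgue C | C. C \<subseteq> A \<and> C \<in> sets lebesgue \<and> symmetric_set C}"
    using assms(1) by (auto intro!: bdd_aboveI[of _ "measure lebesgue A"] measure_mono_fmeasurable)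
qed

lemma D_nonneg: "A \<in> lmeasurable \<Longrightarrow> 0 \<le> D A"
  using measure_le_D[of A "{}"] by simp

lemma D_le:
  assumes "\<And>C. C \<subseteq> A \<Longrightarrow> C \<in> sets lebesgue \<Longrightarrow> symmetric_set C \<Longrightarrow> measure lebesgue C \<le> b"
  shows "D A \<le> b"
  unfolding D_def
proof (rule cSup_least)
  show "{measure lebesgue C | C. C \<subseteq> A \<and> C \<in> sets lebesgue \<and> symmetric_set C} \<noteq> {}"
    using symmetric_set_empty by blast
qed (use assms in auto)

text \<open>If x \<in> C \<longleftrightarrow> d - x \<in> C, then C \<inter> A \<inter> (d - A) is symmetric too and misses only
  C - A and its reflection.\<close>
lemma measure_minus_excess_le_D:
  assumes A: "A \<in> lmeasurable" and C: "C \<in> lmeasurable" "symmetric_set C"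
  shows "measure lebesgue C - 2 * measure lebesgue (C - A) \<le> D A"
proof -
  obtain d where d: "\<And>x. x \<in> C \<longleftrightarrow> d - x \<in> C"
    using C(2) by (auto simp: symmetric_set_iff_reflection)
  define C' where "C' = C \<inter> A \<inter> (\<lambda>x. d - x) -` A"
  have C'_sets: "C' \<in> sets lebesgue"
    unfolding C'_def using A C sets_lebesgue_reflect[of A d] by auto
  have "x \<in> C' \<longleftrightarrow> d - x \<in> C'" for x
    unfolding C'_def using d[of x] by auto
  then have "symmetric_set C'"
    unfolding symmetric_set_iff_reflection by blast
  then have C'_le: "measure lebesgue C' \<le> D A"
    using A C'_sets by (intro measure_le_D) (auto simp: C'_def)
  have C_minus_C': "C - C' = (C - A) \<union> (\<lambda>x. d - x) ` (C - A)"
  proof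
    show "C - C' \<subseteq> (C - A) \<union> (\<lambda>x. d - x) ` (C - A)"
    proof
      fix x assume x: "x \<in> C - C'"
      show "x \<in> (C - A) \<union> (\<lambda>x. d - x) ` (C - A)"
      proof (cases "x \<in> A")
        case True
        then have "d - x \<in> C - A" using x d[of x] unfolding C'_def by auto
        then show ?thesis by (intro UnI2 image_eqI[of _ _ "d - x"]) auto
      qed (use x in auto)
    qed
    show "(C - A) \<union> (\<lambda>x. d - x) ` (C - A) \<subseteq> C - C'"
      using d unfolding C'_def by auto
  qed
  have "(\<lambda>x. d - x) ` (C - A) = (\<lambda>x. d - x) -` (C - A)"
    by (auto intro: image_eqI[of _ _ "d - _"])
  then have reflection_sets: "(\<lambda>x. d - x) ` (C - A) \<in> sets lebesgue"
    using sets_lebesgue_reflect[of "C - A" d] A C by auto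
  have "measure lebesgue (C - C') = measure lebesgue C - measure lebesgue C'"
    using C(1) C'_sets by (intro measurable_measure_Diff) (auto simp: C'_def)
  then have "measure lebesgue C = measure lebesgue C' + measure lebesgue (C - C')" by simp
  also have "measure lebesgue (C - C')
      \<le> measure lebesgue (C - A) + measure lebesgue ((\<lambda>x. d - x) ` (C - A))"
    unfolding C_minus_C' by (rule measure_Un_le) (use A C reflection_sets in auto)
  finally show ?thesis using C'_le measure_lebesgue_reflect[of d "C - A"] by linarith
qed

lemma D_ge_one:
  assumes "A \<subseteq> {0..<1}" "A \<in> sets lebesgue" "measure lebesgue A = 1"
  shows "1 \<le> D A"
proof -
  have "measure lebesgue ({0..<1} - A) = 0"
    using measure_Diff[of lebesgue "{0..<1::real}" A] assms by simp
  moreover have "measure lebesgue ({0<..<1} - A) \<le> measure lebesgue ({0..<1} - A)"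
    using assms by (intro measure_mono_fmeasurable lmeasurable_subset_unit) auto
  moreover have "symmetric_set {0<..<1::real}"
    unfolding symmetric_set_iff_reflection by (intro exI[of _ 1]) auto
  then have "measure lebesgue {0<..<1::real} - 2 * measure lebesgue ({0<..<1} - A) \<le> D A"
    using assms by (intro measure_minus_excess_le_D lmeasurable_subset_unit) auto
  ultimately show ?thesis using measure_nonneg[of lebesgue "{0<..<1} - A"] by simp
qed

lemma Delta_le_D:
  assumes "A \<subseteq> {0..<1}" "A \<in> sets lebesgue" "measure lebesgue A = \<epsilon>"
  shows "Delta \<epsilon> \<le> D A"
  unfolding Delta_def
proof (rule cInf_lower)
  show "D A \<in> {D A | A. A \<subseteq> {0..<1} \<and> A \<in> sets lebesgue \<and> measure lebesgue A = \<epsilon>}"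
    using assms by blast
  show "bdd_below {D A | A. A \<subseteq> {0..<1} \<and> A \<in> sets lebesgue \<and> measure lebesgue A = \<epsilon>}"
    by (rule bdd_belowI[of _ 0]) (auto intro: D_nonneg lmeasurable_subset_unit)
qed

definition rep_count :: "int set \<Rightarrow> int \<Rightarrow> nat" where
  "rep_count S m = card {s \<in> S. m - s \<in> S}"

lemma card_sum_pairs_eq_rep_count:
  "card {(s1, s2). s1 \<in> S \<and> s2 \<in> S \<and> s1 + s2 = m} = rep_count S m"
proof -
  have "{(s1, s2). s1 \<in> S \<and> s2 \<in> S \<and> s1 + s2 = m} = (\<lambda>s. (s, m - s)) ` {s \<in> S. m - s \<in> S}"
    by force
  moreover have "inj_on (\<lambda>s. (s, m - s)) {s \<in> S. m - s \<in> S}"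
    by (auto simp: inj_on_def)
  ultimately show ?thesis by (simp add: card_image rep_count_def)
qed

lemma Bstar_iff_rep_count: "Bstar g S \<longleftrightarrow> (\<forall>m. rep_count S m \<le> g)"
  by (simp add: Bstar_def card_sum_pairs_eq_rep_count)

lemma rep_count_le_card: "finite S \<Longrightarrow> rep_count S m \<le> card S"
  unfolding rep_count_def by (rule card_mono) auto

lemma one_le_rep_count_double:
  assumes "finite S" "s \<in> S"
  shows "1 \<le> rep_count S (2 * s)"
proof -
  have "s \<in> {t \<in> S. 2 * s - t \<in> S}" using assms(2) by simp
  then have "{t \<in> S. 2 * s - t \<in> S} \<noteq> {}" by blast
  then show ?thesis
    using assms(1) by (simp add: rep_count_def Suc_le_eq card_gt_0_iff)
qed

lemma Bstar_max_rep_count: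
  assumes "finite S"
  obtains m where "Bstar (rep_count S m) S"
proof -
  have "finite (range (rep_count S))"
    by (rule finite_subset[of _ "{0..card S}"]) (use rep_count_le_card[OF assms] in auto)
  then have "Max (range (rep_count S)) \<in> range (rep_count S)"
    by (rule Max_in) auto
  then obtain m where "rep_count S m = Max (range (rep_count S))" by auto
  moreover have "rep_count S m' \<le> Max (range (rep_count S))" for m'
    using \<open>finite (range (rep_count S))\<close> by (rule Max_ge) auto
  ultimately show thesis by (intro that[of m]) (simp add: Bstar_iff_rep_count)
qed

lemma finite_card_Bstar_subsets: "finite (card ` {S. S \<subseteq> {1..int n} \<and> Bstar g S})"
  by (rule finite_imageI, rule finite_subset[of _ "Pow {1..int n}"]) auto

lemma card_le_R: "S \<subseteq> {1..int n} \<Longrightarrow> Bstar g S \<Longrightarrow> card S \<le> R g n"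
  unfolding R_def by (rule Max_ge[OF finite_card_Bstar_subsets]) auto

lemma R_attained:
  obtains S where "S \<subseteq> {1..int n}" "Bstar g S" "card S = R g n"
proof -
  have "Bstar g {}" by (simp add: Bstar_iff_rep_count rep_count_def)
  then have "R g n \<in> card ` {S. S \<subseteq> {1..int n} \<and> Bstar g S}"
    unfolding R_def by (intro Max_in[OF finite_card_Bstar_subsets]) auto
  then show thesis using that by auto
qed

lemma one_le_R:
  assumes "1 \<le> g" "1 \<le> n"
  shows "1 \<le> R g n"
proof -
  have "rep_count {1} m \<le> g" for m
    using rep_count_le_card[of "{1}" m] assms(1) by simp
  then have "card {1::int} \<le> R g n"
    using assms(2) by (intro card_le_R) (auto simp: Bstar_iff_rep_count)
  then show ?thesis by simp
qed

definition grid_cell :: "nat \<Rightarrow> int \<Rightarrow> real set" where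
  "grid_cell n k = {real_of_int (k - 1) / n ..< real_of_int k / n}"

definition open_grid_cell :: "nat \<Rightarrow> int \<Rightarrow> real set" where
  "open_grid_cell n k = {real_of_int (k - 1) / n <..< real_of_int k / n}"

lemma mem_grid_cell_iff:
  assumes "n > 0"
  shows "x \<in> grid_cell n k \<longleftrightarrow> real_of_int (k - 1) \<le> x * n \<and> x * n < real_of_int k"
  using assms by (auto simp: grid_cell_def divide_le_eq le_divide_eq less_divide_eq)

lemma mem_open_grid_cell_iff:
  assumes "n > 0"
  shows "x \<in> open_grid_cell n k \<longleftrightarrow> real_of_int (k - 1) < x * n \<and> x * n < real_of_int k"
  using assms by (auto simp: open_grid_cell_def divide_less_eq less_divide_eq)

lemma open_grid_cell_subset: "open_grid_cell n k \<subseteq> grid_cell n k"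
  by (auto simp: open_grid_cell_def grid_cell_def)

lemma lmeasurable_grid_cell [simp]: "grid_cell n k \<in> lmeasurable"
  unfolding grid_cell_def by (rule fmeasurableI2[of "{real_of_int (k - 1) / n .. real_of_int k / n}"]) auto

lemma lmeasurable_open_grid_cell [simp]: "open_grid_cell n k \<in> lmeasurable"
  by (simp add: open_grid_cell_def)

lemma measure_grid_cell:
  assumes "n > 0"
  shows "measure lebesgue (grid_cell n k) = 1 / n"
    and "measure lebesgue (open_grid_cell n k) = 1 / n"
proof -
  have "real_of_int (k - 1) / n \<le> real_of_int k / n"
    using assms by (intro divide_right_mono) auto
  moreover have "real_of_int k / n - real_of_int (k - 1) / n = 1 / n"
    by (simp add: diff_divide_distrib[symmetric])
  ultimately show "measure lebesgue (grid_cell n k) = 1 / n"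
    and "measure lebesgue (open_grid_cell n k) = 1 / n"
    by (simp_all add: grid_cell_def open_grid_cell_def)
qed

lemma grid_cell_disjoint:
  assumes "n > 0" "k \<noteq> l"
  shows "grid_cell n k \<inter> grid_cell n l = {}"
proof (rule ccontr)
  assume "grid_cell n k \<inter> grid_cell n l \<noteq> {}"
  then obtain x where "x \<in> grid_cell n k" "x \<in> grid_cell n l" by blast
  then have "real_of_int (k - 1) < real_of_int l" "real_of_int (l - 1) < real_of_int k"
    using assms(1) by (auto simp: mem_grid_cell_iff)
  then have "k - 1 < l" "l - 1 < k" by (simp_all only: of_int_less_iff)
  then show False using assms(2) by linarith
qed

lemma measure_UN_subsets_grid_cells:
  assumes "n > 0" "finite S" "\<And>k. F k \<subseteq> grid_cell n k" "\<And>k. F k \<in> sets lebesgue"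
  shows "measure lebesgue (\<Union>k\<in>S. F k) = (\<Sum>k\<in>S. measure lebesgue (F k))"
proof (rule measure_finite_Union)
  show "disjoint_family_on F S"
    unfolding disjoint_family_on_def using assms(3) grid_cell_disjoint[OF assms(1)] by blast
  show "emeasure lebesgue (F k) \<noteq> \<infinity>" for k
    using fmeasurableD2[OF fmeasurableI2[OF lmeasurable_grid_cell assms(3,4)]]
    by (simp add: infinity_ennreal_def)
qed (use assms in auto)

lemma measure_UN_grid_cells:
  assumes "n > 0" "finite S"
  shows "measure lebesgue (\<Union>k\<in>S. grid_cell n k) = card S / n"
    and "measure lebesgue (\<Union>k\<in>S. open_grid_cell n k) = card S / n"
  using measure_UN_subsets_grid_cells[OF assms, of "grid_cell n"]
    measure_UN_subsets_grid_cells[OF assms, of "open_grid_cell n"]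
  by (auto simp: measure_grid_cell[OF assms(1)] open_grid_cell_subset fmeasurableD)

lemma UN_grid_cells_eq_unit:
  assumes "n > 0"
  shows "(\<Union>k\<in>{1..int n}. grid_cell n k) = {0..<1}"
proof
  show "(\<Union>k\<in>{1..int n}. grid_cell n k) \<subseteq> {0..<1}"
  proof
    fix x assume "x \<in> (\<Union>k\<in>{1..int n}. grid_cell n k)"
    then obtain k where k: "1 \<le> k" "k \<le> int n" "x \<in> grid_cell n k" by auto
    then have "real_of_int (k - 1) \<le> x * n" "x * n < real_of_int k"
      using assms by (simp_all add: mem_grid_cell_iff)
    moreover have "0 \<le> real_of_int (k - 1)" "real_of_int k \<le> real n"
      using k(1,2) by (simp, metis of_int_le_iff of_int_of_nat_eq)
    ultimately have "0 \<le> x * n" "x * n < 1 * n" by linarith+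
    then show "x \<in> {0..<1}"
      using assms by (auto simp: zero_le_mult_iff dest: mult_right_less_imp_less)
  qed
next
  show "{0..<1} \<subseteq> (\<Union>k\<in>{1..int n}. grid_cell n k)"
  proof
    fix x :: real assume x: "x \<in> {0..<1}"
    define k where "k = \<lfloor>x * n\<rfloor> + 1"
    have cell: "real_of_int (k - 1) \<le> x * n" "x * n < real_of_int k"
      unfolding k_def by linarith+
    have "0 \<le> x * n" "x * n < n" using x assms by auto
    then have "1 \<le> k" "k \<le> int n"
      unfolding k_def by linarith+
    moreover have "x \<in> grid_cell n k"
      using cell assms by (simp add: mem_grid_cell_iff)
    ultimately show "x \<in> (\<Union>k\<in>{1..int n}. grid_cell n k)" by auto
  qed
qed

lemma dist_grid_cell_less:
  assumes "n > 0" "x \<in> grid_cell n k" "y \<in> grid_cell n k"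
  shows "dist x y < 1 / n"
proof -
  have "\<bar>x * n - y * n\<bar> < 1" using assms by (auto simp: mem_grid_cell_iff)
  then have "\<bar>x - y\<bar> * n < 1" by (simp add: left_diff_distrib[symmetric] abs_mult)
  then show ?thesis using assms(1) by (simp add: dist_real_def less_divide_eq)
qed

subsection \<open>The bound \<open>\<Delta>(\<epsilon>) \<le> g/n\<close>\<close>

lemma reflected_grid_cell_index:
  fixes u v \<phi> :: real and q s t :: int
  assumes u: "real_of_int (s - 1) \<le> u" "u < real_of_int s"
    and v: "real_of_int (t - 1) \<le> v" "v < real_of_int t"
    and uv: "u + v = q + \<phi>" and \<phi>: "0 \<le> \<phi>" "\<phi> < 1"
  shows "u \<le> real_of_int (s - 1) + \<phi> \<Longrightarrow> t = q + 2 - s"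
    and "real_of_int (s - 1) + \<phi> < u \<Longrightarrow> t = q + 1 - s"
proof -
  have floor_v: "\<lfloor>v\<rfloor> = t - 1" using v by (simp add: floor_eq_iff)
  show "t = q + 2 - s" if "u \<le> real_of_int (s - 1) + \<phi>"
  proof -
    have "\<lfloor>v\<rfloor> = q + 1 - s" using that u uv \<phi> by (simp add: floor_eq_iff; linarith)
    then show ?thesis using floor_v by simp
  qed
  show "t = q + 1 - s" if "real_of_int (s - 1) + \<phi> < u"
  proof -
    have "\<lfloor>v\<rfloor> = q - s" using that u uv \<phi> by (simp add: floor_eq_iff; linarith)
    then show ?thesis using floor_v by simp
  qed
qed

lemma symmetric_subset_grid_cells_cover:
  assumes n: "n > 0" and C: "C \<subseteq> (\<Union>s\<in>S. grid_cell n s)" and d: "\<And>x. x \<in> C \<longleftrightarrow> d - x \<in> C"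
  defines "q \<equiv> \<lfloor>d * n\<rfloor>" and "\<phi> \<equiv> d * n - \<lfloor>d * n\<rfloor>"
  shows "C \<subseteq> (\<Union>s\<in>{s \<in> S. q + 2 - s \<in> S}. {real_of_int (s - 1) / n .. (real_of_int (s - 1) + \<phi>) / n})
            \<union> (\<Union>s\<in>{s \<in> S. q + 1 - s \<in> S}. {(real_of_int (s - 1) + \<phi>) / n <..< real_of_int s / n})"
proof
  have \<phi>: "0 \<le> \<phi>" "\<phi> < 1" unfolding \<phi>_def by linarith+
  fix y assume "y \<in> C"
  then obtain s t where s: "s \<in> S" "y \<in> grid_cell n s" and t: "t \<in> S" "d - y \<in> grid_cell n t"
    using C d by blast
  have u: "real_of_int (s - 1) \<le> y * n" "y * n < real_of_int s"
    using s(2) n by (simp_all add: mem_grid_cell_iff)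
  have v: "real_of_int (t - 1) \<le> (d - y) * n" "(d - y) * n < real_of_int t"
    using t(2) n by (simp_all add: mem_grid_cell_iff)
  have uv: "y * n + (d - y) * n = q + \<phi>" unfolding \<phi>_def q_def by (simp add: algebra_simps)
  show "y \<in> (\<Union>s\<in>{s \<in> S. q + 2 - s \<in> S}. {real_of_int (s - 1) / n .. (real_of_int (s - 1) + \<phi>) / n})
            \<union> (\<Union>s\<in>{s \<in> S. q + 1 - s \<in> S}. {(real_of_int (s - 1) + \<phi>) / n <..< real_of_int s / n})"
  proof (cases "y * n \<le> real_of_int (s - 1) + \<phi>")
    case True
    then have "t = q + 2 - s" by (rule reflected_grid_cell_index(1)[OF u v uv \<phi>])
    moreover have "y \<in> {real_of_int (s - 1) / n .. (real_of_int (s - 1) + \<phi>) / n}"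
      using True u n by (auto simp: divide_le_eq le_divide_eq)
    ultimately show ?thesis using s t by blast
  next
    case False
    then have "t = q + 1 - s" by (intro reflected_grid_cell_index(2)[OF u v uv \<phi>]) simp
    moreover have "y \<in> {(real_of_int (s - 1) + \<phi>) / n <..< real_of_int s / n}"
      using False u n by (auto simp: divide_less_eq less_divide_eq)
    ultimately show ?thesis using s t by blast
  qed
qed

lemma measure_symmetric_subset_grid_cells_le:
  assumes n: "n > 0" and S: "finite S" "Bstar g S"
    and C: "C \<subseteq> (\<Union>s\<in>S. grid_cell n s)" "C \<in> sets lebesgue" "symmetric_set C"
  shows "measure lebesgue C \<le> g / n"
proof -
  obtain d where d: "\<And>x. x \<in> C \<longleftrightarrow> d - x \<in> C"
    using C(3) by (auto simp: symmetric_set_iff_reflection)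
  define q where "q = \<lfloor>d * n\<rfloor>"
  define \<phi> where "\<phi> = d * n - q"
  have \<phi>: "0 \<le> \<phi>" "\<phi> < 1" unfolding \<phi>_def q_def by linarith+
  define left where "left s = {real_of_int (s - 1) / n .. (real_of_int (s - 1) + \<phi>) / n}" for s
  define right where "right s = {(real_of_int (s - 1) + \<phi>) / n <..< real_of_int s / n}" for s
  define UL where "UL = (\<Union>s\<in>{s \<in> S. q + 2 - s \<in> S}. left s)"
  define UR where "UR = (\<Union>s\<in>{s \<in> S. q + 1 - s \<in> S}. right s)"
  have cover: "C \<subseteq> UL \<union> UR"
    using symmetric_subset_grid_cells_cover[OF n C(1) d]
    unfolding UL_def UR_def left_def right_def q_def \<phi>_def .
  have left_sub: "left s \<subseteq> grid_cell n s" and right_sub: "right s \<subseteq> grid_cell n s" for s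
    using \<phi> n by (auto simp: left_def right_def mem_grid_cell_iff divide_le_eq le_divide_eq
        divide_less_eq less_divide_eq)
  have "measure lebesgue (left s) = \<phi> / n" and "measure lebesgue (right s) = (1 - \<phi>) / n" for s
    using \<phi> n by (simp_all add: left_def right_def divide_right_mono diff_divide_distrib[symmetric])
  then have UL_measure: "measure lebesgue UL = rep_count S (q + 2) * (\<phi> / n)"
    and UR_measure: "measure lebesgue UR = rep_count S (q + 1) * ((1 - \<phi>) / n)"
    unfolding UL_def UR_def rep_count_def
    using measure_UN_subsets_grid_cells[OF n _ left_sub] measure_UN_subsets_grid_cells[OF n _ right_sub] S(1)
    by (auto simp: left_def right_def)
  have UL_lmeasurable: "UL \<in> lmeasurable" and UR_lmeasurable: "UR \<in> lmeasurable"
    using S(1) by (auto simp: UL_def UR_def left_def right_def intro!: fmeasurable.finite_UN)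
  have "measure lebesgue C \<le> measure lebesgue (UL \<union> UR)"
    using UL_lmeasurable UR_lmeasurable by (intro measure_mono_fmeasurable[OF cover C(2)]) auto
  also have "\<dots> \<le> measure lebesgue UL + measure lebesgue UR"
    using UL_lmeasurable UR_lmeasurable by (intro measure_Un_le) auto
  also have "\<dots> \<le> g * (\<phi> / n) + g * ((1 - \<phi>) / n)"
    unfolding UL_measure UR_measure using S(2) \<phi> n
    by (intro add_mono mult_right_mono) (auto simp: Bstar_iff_rep_count)
  also have "\<dots> = g / n" using n by (simp add: field_simps)
  finally show ?thesis .
qed

lemma exists_subset_grid_cells_with_measure:
  assumes n: "n > 0" and S: "finite S" and \<epsilon>: "0 \<le> \<epsilon>" "\<epsilon> \<le> card S / n"
  obtains A where "A \<subseteq> (\<Union>s\<in>S. grid_cell n s)" "A \<in> sets lebesgue" "measure lebesgue A = \<epsilon>"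
proof -
  define l where "l = \<epsilon> / card S"
  define I where "I s = {real_of_int (s - 1) / n ..< real_of_int (s - 1) / n + l}" for s
  have l: "0 \<le> l" "l \<le> 1 / n"
    using \<epsilon> n by (auto simp: l_def field_simps divide_le_eq_1)
  have I_sub: "I s \<subseteq> grid_cell n s" for s
  proof -
    have "real_of_int (s - 1) / n + l \<le> real_of_int s / n"
      using l by (simp add: diff_divide_distrib)
    then show ?thesis by (auto simp: I_def grid_cell_def)
  qed
  have "measure lebesgue (\<Union>s\<in>S. I s) = card S * l"
    using measure_UN_subsets_grid_cells[OF n S I_sub] l by (simp add: I_def)
  also have "\<dots> = \<epsilon>"
  proof (cases "S = {}")
    case True
    then show ?thesis using \<epsilon> by (simp add: l_def)
  qed (use S in \<open>simp add: l_def\<close>)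
  finally show thesis
    using I_sub by (intro that[of "\<Union>s\<in>S. I s"]) (auto simp: I_def)
qed

lemma Delta_le_ratio:
  assumes n: "n > 0" and \<epsilon>: "0 \<le> \<epsilon>" "\<epsilon> \<le> R g n / n"
  shows "Delta \<epsilon> \<le> g / n"
proof -
  obtain S where S: "S \<subseteq> {1..int n}" "Bstar g S" "card S = R g n"
    by (rule R_attained)
  have S_finite: "finite S" using S(1) finite_subset by blast
  obtain A where A: "A \<subseteq> (\<Union>s\<in>S. grid_cell n s)" "A \<in> sets lebesgue" "measure lebesgue A = \<epsilon>"
    using exists_subset_grid_cells_with_measure[OF n S_finite] \<epsilon> S(3) by metis
  have "A \<subseteq> {0..<1}"
    using A(1) S(1) UN_grid_cells_eq_unit[OF n] by blast
  then have "Delta \<epsilon> \<le> D A" using A(2,3) by (rule Delta_le_D)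
  also have "D A \<le> g / n"
    using A(1) by (intro D_le measure_symmetric_subset_grid_cells_le[OF n S_finite S(2)]) auto
  finally show ?thesis .
qed

subsection \<open>The bound \<open>g/n \<le> D(A)\<close> up to an error\<close>

lemma exists_small_positive_subset:
  fixes X :: "real set"
  assumes X: "X \<subseteq> {0..<1}" "X \<in> sets lebesgue" "0 < measure lebesgue X" and "0 < \<eta>"
  obtains E where "E \<subseteq> X" "E \<in> sets lebesgue" "0 < measure lebesgue E" "measure lebesgue E \<le> \<eta>"
proof -
  obtain N :: nat where N: "1 / \<eta> < N" using reals_Archimedean2 by blast
  moreover have "0 < 1 / \<eta>" using \<open>0 < \<eta>\<close> by simp
  ultimately have "0 < real N" by linarith
  then have N_pos: "N > 0" by simp
  have "1 / N \<le> \<eta>" using N \<open>0 < \<eta>\<close> N_pos by (simp add: field_simps)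
  have X_eq: "(\<Union>k\<in>{1..int N}. X \<inter> grid_cell N k) = X"
    using X(1) UN_grid_cells_eq_unit[OF N_pos] by blast
  have "measure lebesgue (\<Union>k\<in>{1..int N}. X \<inter> grid_cell N k)
      \<le> (\<Sum>k\<in>{1..int N}. measure lebesgue (X \<inter> grid_cell N k))"
    by (rule measure_UNION_le) (simp_all add: X(2) sets.Int fmeasurableD)
  then have X_le: "measure lebesgue X \<le> (\<Sum>k\<in>{1..int N}. measure lebesgue (X \<inter> grid_cell N k))"
    unfolding X_eq .
  have "\<exists>k. 0 < measure lebesgue (X \<inter> grid_cell N k)"
  proof (rule ccontr)
    assume "\<not> (\<exists>k. 0 < measure lebesgue (X \<inter> grid_cell N k))"
    then have "(\<Sum>k\<in>{1..int N}. measure lebesgue (X \<inter> grid_cell N k)) \<le> 0"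
      by (intro sum_nonpos) (simp add: not_less)
    then show False using X(3) X_le by linarith
  qed
  then obtain k where k: "0 < measure lebesgue (X \<inter> grid_cell N k)" by blast
  have "measure lebesgue (X \<inter> grid_cell N k) \<le> measure lebesgue (grid_cell N k)"
    using X(2) by (intro measure_mono_fmeasurable) (simp_all add: sets.Int fmeasurableD)
  then show thesis
    using k X(2) \<open>1 / N \<le> \<eta>\<close> measure_grid_cell(1)[OF N_pos]
    by (intro that[of "X \<inter> grid_cell N k"]) (simp_all add: sets.Int fmeasurableD)
qed

lemma exists_slightly_larger_superset:
  fixes A :: "real set"
  assumes A: "A \<subseteq> {0..<1}" "A \<in> sets lebesgue" "measure lebesgue A < 1" and "0 < \<eta>"
  obtains A' where "A \<subseteq> A'" "A' \<subseteq> {0..<1}" "A' \<in> sets lebesgue"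
    "measure lebesgue A < measure lebesgue A'" "measure lebesgue (A' - A) \<le> \<eta>"
proof -
  have "measure lebesgue ({0..<1} - A) = 1 - measure lebesgue A"
    using A measure_Diff[of lebesgue "{0..<1::real}" A] by simp
  then have "{0..<1} - A \<subseteq> {0..<1}" "{0..<1} - A \<in> sets lebesgue" "0 < measure lebesgue ({0..<1} - A)"
    using A by auto
  then obtain E where E: "E \<subseteq> {0..<1} - A" "E \<in> sets lebesgue" "0 < measure lebesgue E"
      "measure lebesgue E \<le> \<eta>"
    using exists_small_positive_subset \<open>0 < \<eta>\<close> by blast
  have "E - A = E" using E(1) by blast
  then have "measure lebesgue (A \<union> E) = measure lebesgue A + measure lebesgue E"
    using measure_Un2[OF lmeasurable_subset_unit[OF A(1,2)] lmeasurable_subset_unit[of E]] E(1,2)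
    by auto
  moreover have "(A \<union> E) - A = E" using \<open>E - A = E\<close> by blast
  ultimately show thesis
    using that[of "A \<union> E"] A(1,2) E by auto
qed

text \<open>T has measure strictly larger than A because it approximates a slightly larger set
  from inside.\<close>
lemma exists_compact_open_sandwich:
  fixes A :: "real set"
  assumes A: "A \<subseteq> {0..<1}" "A \<in> sets lebesgue" "measure lebesgue A < 1" and "0 < \<eta>"
  obtains T V where "compact T" "T \<subseteq> {0..<1}" "open V" "T \<subseteq> V"
    "measure lebesgue A < measure lebesgue T" "V - A \<in> lmeasurable" "measure lebesgue (V - A) < \<eta>"
proof -
  have "0 < \<eta> / 2" using \<open>0 < \<eta>\<close> by simp
  with A obtain A' where A': "A \<subseteq> A'" "A' \<subseteq> {0..<1}" "A' \<in> sets lebesgue"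
      "measure lebesgue A < measure lebesgue A'" "measure lebesgue (A' - A) \<le> \<eta> / 2"
    by (rule exists_slightly_larger_superset)
  obtain V where V: "open V" "A' \<subseteq> V" "V - A' \<in> lmeasurable" "emeasure lebesgue (V - A') < \<eta> / 2"
    using \<open>0 < \<eta> / 2\<close> by (rule sets_lebesgue_outer_open[OF A'(3)])
  have "0 < measure lebesgue A' - measure lebesgue A" using A'(4) by simp
  then obtain T where T: "closed T" "T \<subseteq> A'" "A' - T \<in> lmeasurable"
      "emeasure lebesgue (A' - T) < measure lebesgue A' - measure lebesgue A"
    by (rule sets_lebesgue_inner_closed[OF A'(3)])
  have "T \<subseteq> {0..1}" using T(2) A'(2) by auto
  then have "bounded T" by (rule bounded_subset[rotated]) simp
  with T(1) have "compact T" by (simp add: compact_eq_bounded_closed)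
  have "measure lebesgue (A' - T) = measure lebesgue A' - measure lebesgue T"
    using lmeasurable_subset_unit[OF A'(2,3)] lmeasurable_compact[OF \<open>compact T\<close>] T(2)
    by (intro measurable_measure_Diff) auto
  moreover have "measure lebesgue (A' - T) < measure lebesgue A' - measure lebesgue A"
    using T(4) unfolding emeasure_eq_measure2[OF T(3)] by (simp add: ennreal_less_iff)
  ultimately have T_measure: "measure lebesgue A < measure lebesgue T" by linarith
  have A'_minus_A: "A' - A \<in> lmeasurable"
    using A'(2,3) A(2) by (intro lmeasurable_subset_unit) auto
  have VA_sub: "V - A \<subseteq> (V - A') \<union> (A' - A)" by blast
  have VA'_lmeasurable: "(V - A') \<union> (A' - A) \<in> lmeasurable"
    using V(3) A'_minus_A by auto
  have "V \<in> sets lebesgue" using V(1) by (simp add: borel_open)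
  then have VA_sets: "V - A \<in> sets lebesgue" using A(2) by auto
  have "measure lebesgue (V - A') < \<eta> / 2"
    using V(4) unfolding emeasure_eq_measure2[OF V(3)] by (simp add: ennreal_less_iff)
  moreover have "measure lebesgue (V - A) \<le> measure lebesgue ((V - A') \<union> (A' - A))"
    by (rule measure_mono_fmeasurable[OF VA_sub VA_sets VA'_lmeasurable])
  moreover have "\<dots> \<le> measure lebesgue (V - A') + measure lebesgue (A' - A)"
    using V(3) A'_minus_A by (intro measure_Un_le) auto
  ultimately have "measure lebesgue (V - A) < \<eta>" using A'(5) by linarith
  moreover have "V - A \<in> lmeasurable" by (rule fmeasurableI2[OF VA'_lmeasurable VA_sub VA_sets])
  moreover have "T \<subseteq> {0..<1}" "T \<subseteq> V" using T(2) A'(2) V(2) by auto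
  ultimately show thesis
    using that[OF \<open>compact T\<close> _ V(1) _ T_measure] by blast
qed

lemma compact_subset_grid_cells_in_open:
  fixes T V :: "real set"
  assumes "compact T" "T \<subseteq> {0..<1}" "open V" "T \<subseteq> V"
  obtains n where "n > 0" "T \<subseteq> (\<Union>k\<in>{k \<in> {1..int n}. grid_cell n k \<subseteq> V}. grid_cell n k)"
proof -
  have "T \<inter> - V = {}" using assms(4) by blast
  then obtain r where r: "r > 0" "\<And>x y. x \<in> T \<Longrightarrow> y \<in> - V \<Longrightarrow> r \<le> dist x y"
    using separate_compact_closed[OF assms(1)] assms(3) by (metis closed_Compl)
  obtain n :: nat where n: "1 / r < n" using reals_Archimedean2 by blast
  moreover have "0 < 1 / r" using r(1) by simp
  ultimately have "0 < real n" by linarith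
  then have n_pos: "n > 0" by simp
  have "1 / n < r" using n r(1) n_pos by (simp add: field_simps)
  show thesis
  proof (rule that[OF n_pos], rule subsetI)
    fix x assume "x \<in> T"
    then obtain k where k: "k \<in> {1..int n}" "x \<in> grid_cell n k"
      using assms(2) UN_grid_cells_eq_unit[OF n_pos] by blast
    have "grid_cell n k \<subseteq> V"
    proof
      fix y assume "y \<in> grid_cell n k"
      then have "dist x y < r"
        using dist_grid_cell_less[OF n_pos k(2)] \<open>1 / n < r\<close> by fastforce
      then show "y \<in> V" using r(2)[OF \<open>x \<in> T\<close>, of y] by fastforce
    qed
    then show "x \<in> (\<Union>k\<in>{k \<in> {1..int n}. grid_cell n k \<subseteq> V}. grid_cell n k)"
      using k by blast
  qed
qed

lemma grid_cells_outer_approximation: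
  fixes A :: "real set"
  assumes A: "A \<subseteq> {0..<1}" "A \<in> sets lebesgue" "measure lebesgue A < 1" and "0 < \<delta>"
  obtains n S where "n > 0" "S \<subseteq> {1..int n}" "measure lebesgue A < card S / n"
    "measure lebesgue ((\<Union>s\<in>S. grid_cell n s) - A) < \<delta>"
proof -
  obtain T V where TV: "compact T" "T \<subseteq> {0..<1}" "open V" "T \<subseteq> V"
    "measure lebesgue A < measure lebesgue T" "V - A \<in> lmeasurable" "measure lebesgue (V - A) < \<delta>"
    using exists_compact_open_sandwich[OF A \<open>0 < \<delta>\<close>] by blast
  obtain n where n: "n > 0" and T_cover: "T \<subseteq> (\<Union>k\<in>{k \<in> {1..int n}. grid_cell n k \<subseteq> V}. grid_cell n k)"
    using compact_subset_grid_cells_in_open[OF TV(1-4)] by blast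
  define S where "S = {k \<in> {1..int n}. grid_cell n k \<subseteq> V}"
  have S_finite: "finite S"
    by (rule finite_subset[of _ "{1..int n}"]) (auto simp: S_def)
  have U_lmeasurable: "(\<Union>s\<in>S. grid_cell n s) \<in> lmeasurable"
    using S_finite by (intro fmeasurable.finite_UN) auto
  have "measure lebesgue T \<le> measure lebesgue (\<Union>s\<in>S. grid_cell n s)"
    using T_cover lmeasurable_compact[OF TV(1)] U_lmeasurable unfolding S_def[symmetric]
    by (intro measure_mono_fmeasurable) auto
  also have "\<dots> = card S / n" by (rule measure_UN_grid_cells(1)[OF n S_finite])
  finally have "measure lebesgue A < card S / n" using TV(5) by linarith
  moreover have "measure lebesgue ((\<Union>s\<in>S. grid_cell n s) - A) \<le> measure lebesgue (V - A)"
    using TV(6) A(2) U_lmeasurable by (intro measure_mono_fmeasurable) (auto simp: S_def)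
  ultimately show thesis
    using that[OF n, of S] TV(7) by (force simp: S_def)
qed

lemma reflect_open_grid_cell:
  assumes "n > 0" "x \<in> open_grid_cell n s"
  shows "real_of_int (m - 1) / n - x \<in> open_grid_cell n (m - s)"
proof -
  have "(real_of_int (m - 1) / n - x) * n = real_of_int (m - 1) - x * n"
    using assms(1) by (simp add: field_simps)
  then show ?thesis
    using assms by (simp add: mem_open_grid_cell_iff)
qed

lemma symmetric_UN_open_grid_cells:
  assumes "n > 0"
  shows "symmetric_set (\<Union>s\<in>{s \<in> S. m - s \<in> S}. open_grid_cell n s)"
    (is "symmetric_set ?C")
proof -
  have reflect: "real_of_int (m - 1) / n - x \<in> ?C" if "x \<in> ?C" for x
    using that reflect_open_grid_cell[OF assms, of x _ m] by fastforce
  have "x \<in> ?C \<longleftrightarrow> real_of_int (m - 1) / n - x \<in> ?C" for x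
    using reflect[of x] reflect[of "real_of_int (m - 1) / n - x"] by auto
  then show ?thesis unfolding symmetric_set_iff_reflection by blast
qed

lemma rep_count_ratio_le_D:
  assumes n: "n > 0" and S: "finite S" and A: "A \<in> lmeasurable"
  shows "rep_count S m / n - 2 * measure lebesgue ((\<Union>s\<in>S. grid_cell n s) - A) \<le> D A"
proof -
  define C where "C = (\<Union>s\<in>{s \<in> S. m - s \<in> S}. open_grid_cell n s)"
  have C_lmeasurable: "C \<in> lmeasurable"
    using S by (auto simp: C_def intro: fmeasurable.finite_UN)
  have "measure lebesgue C = rep_count S m / n"
    using measure_UN_grid_cells(2)[OF n, of "{s \<in> S. m - s \<in> S}"] S
    by (simp add: C_def rep_count_def)
  moreover have "measure lebesgue (C - A) \<le> measure lebesgue ((\<Union>s\<in>S. grid_cell n s) - A)"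
  proof (rule measure_mono_fmeasurable)
    show "C - A \<subseteq> (\<Union>s\<in>S. grid_cell n s) - A"
      using open_grid_cell_subset unfolding C_def by blast
    show "C - A \<in> sets lebesgue" using C_lmeasurable A by auto
    show "(\<Union>s\<in>S. grid_cell n s) - A \<in> lmeasurable"
      using S A by (intro fmeasurable_Diff fmeasurable.finite_UN) auto
  qed
  moreover have "measure lebesgue C - 2 * measure lebesgue (C - A) \<le> D A"
    using A C_lmeasurable symmetric_UN_open_grid_cells[OF n]
    by (intro measure_minus_excess_le_D) (auto simp: C_def)
  ultimately show ?thesis by linarith
qed

lemma exists_ratio_le_D:
  assumes A: "A \<subseteq> {0..<1}" "A \<in> sets lebesgue" and "0 < \<delta>"
  obtains g n :: nat where "1 \<le> g" "g \<le> n" "measure lebesgue A \<le> R g n / n" "g / n \<le> D A + \<delta>"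
proof (cases "measure lebesgue A < 1")
  case False
  have "measure lebesgue A \<le> measure lebesgue {0..<1::real}"
    using A lmeasurable_subset_unit[of "{0..<1}"] by (intro measure_mono_fmeasurable) auto
  then have "measure lebesgue A = 1" using False by simp
  then show thesis
    using that[of 1 1] one_le_R[of 1 1] D_ge_one[OF A] \<open>0 < \<delta>\<close> by simp
next
  case True
  have "0 < \<delta> / 2" using \<open>0 < \<delta>\<close> by simp
  with A True obtain n S where n: "n > 0" and S: "S \<subseteq> {1..int n}"
    and card_S: "measure lebesgue A < card S / n"
    and excess: "measure lebesgue ((\<Union>s\<in>S. grid_cell n s) - A) < \<delta> / 2"
    by (rule grid_cells_outer_approximation)
  have S_finite: "finite S" using S finite_subset by blast
  obtain m where Bstar_S: "Bstar (rep_count S m) S"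
    using Bstar_max_rep_count[OF S_finite] by blast
  define G where "G = rep_count S m"
  have "S \<noteq> {}" using card_S measure_nonneg[of lebesgue A] by auto
  then obtain s where "s \<in> S" by blast
  then have "1 \<le> G"
    using one_le_rep_count_double[OF S_finite] Bstar_S
    unfolding G_def Bstar_iff_rep_count by (meson order_trans)
  have "card S \<le> n" using card_mono[OF _ S] by simp
  then have "G \<le> n" using rep_count_le_card[OF S_finite, of m] unfolding G_def by linarith
  have "card S \<le> R G n" using S Bstar_S unfolding G_def by (rule card_le_R)
  then have "real (card S) / n \<le> R G n / n" by (simp add: divide_right_mono)
  then have "measure lebesgue A \<le> R G n / n" using card_S by linarith
  moreover have "G / n \<le> D A + \<delta>"
    using rep_count_ratio_le_D[OF n S_finite lmeasurable_subset_unit[OF A], of m] excess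
    unfolding G_def by linarith
  ultimately show thesis using that \<open>1 \<le> G\<close> \<open>G \<le> n\<close> by blast
qed

definition Bstar_ratios :: "real \<Rightarrow> real set" where
  "Bstar_ratios \<epsilon> = {real g / real n | g n :: nat. 1 \<le> g \<and> g \<le> n \<and> real (R g n) / real n \<ge> \<epsilon>}"

lemma bdd_below_Bstar_ratios: "bdd_below (Bstar_ratios \<epsilon>)"
  unfolding Bstar_ratios_def by (rule bdd_belowI[of _ 0]) auto

lemma one_in_Bstar_ratios: "\<epsilon> \<le> 1 \<Longrightarrow> 1 \<in> Bstar_ratios \<epsilon>"
  using one_le_R[of 1 1] unfolding Bstar_ratios_def by force

lemma Delta_le_Inf_Bstar_ratios:
  assumes "0 \<le> \<epsilon>" "\<epsilon> \<le> 1"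
  shows "Delta \<epsilon> \<le> Inf (Bstar_ratios \<epsilon>)"
  using one_in_Bstar_ratios[OF assms(2)] assms(1)
  by (intro cInf_greatest) (auto simp: Bstar_ratios_def intro!: Delta_le_ratio)

lemma Inf_Bstar_ratios_le_D:
  assumes A: "A \<subseteq> {0..<1}" "A \<in> sets lebesgue" "measure lebesgue A = \<epsilon>"
  shows "Inf (Bstar_ratios \<epsilon>) \<le> D A"
proof (rule field_le_epsilon)
  fix \<delta> :: real assume "0 < \<delta>"
  then obtain g n :: nat where "1 \<le> g" "g \<le> n" "\<epsilon> \<le> R g n / n" and g_n: "g / n \<le> D A + \<delta>"
    using exists_ratio_le_D[OF A(1,2)] A(3) by metis
  then have "g / n \<in> Bstar_ratios \<epsilon>" unfolding Bstar_ratios_def by blast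
  with bdd_below_Bstar_ratios have "Inf (Bstar_ratios \<epsilon>) \<le> g / n" by (rule cInf_lower[rotated])
  then show "Inf (Bstar_ratios \<epsilon>) \<le> D A + \<delta>" using g_n by linarith
qed

theorem proposition3p3:
  fixes \<epsilon> :: real
  assumes "0 \<le> \<epsilon>" and "\<epsilon> \<le> 1"
  shows "Delta \<epsilon> = Inf {real g / real n | g n :: nat. 1 \<le> g \<and> g \<le> n \<and> real (R g n) / real n \<ge> \<epsilon>}"
proof -
  have "{0..<\<epsilon>} \<subseteq> {0..<1}" "{0..<\<epsilon>} \<in> sets lebesgue" "measure lebesgue {0..<\<epsilon>} = \<epsilon>"
    using assms by auto
  then have "{D A | A. A \<subseteq> {0..<1} \<and> A \<in> sets lebesgue \<and> measure lebesgue A = \<epsilon>} \<noteq> {}"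
    by blast
  then have "Inf (Bstar_ratios \<epsilon>) \<le> Delta \<epsilon>"
    unfolding Delta_def by (rule cInf_greatest) (auto intro: Inf_Bstar_ratios_le_D)
  with Delta_le_Inf_Bstar_ratios[OF assms] show ?thesis
    unfolding Bstar_ratios_def by linarith
qed

end
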